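(* For every positive integer $n$, $n\mathcal{L} \subseteq \mathcal{L}_n$ and $n\mathcal{M} \subseteq \mathcal{M}_n$, where $n\mathcal{L} = \{n\alpha : \alpha\in\mathcal{L}\}$ and $n\mathcal{M}=\{n\alpha:\alpha\in\mathcal{M}\}$.
   Context: For an irrational real $\xi$ and positive integer $n$, $\lambda_n(\xi) = \limsup_{s/t \to \xi} \dfrac{\gcd(t,n)}{t^2 \left| \frac{s}{t} - \xi\right|}$ (limsup over rationals $s/t$, $t>0$, tending to $\xi$), and $\mathcal{L}_n = \{\lambda_n(\xi)\in\mathbb{R} : \xi\in\mathbb{R}\setminus\mathbb{Q}\}$. For reals $\xi\ne\xi'$, $\mu_n(\xi,\xi') = \sup_{(s,t)\in\mathbb{Z}^2\setminus\{0\}} \dfrac{\gcd(t,n)\,|\xi-\xi'|}{|s-t\xi|\,|s-t\xi'|}$ (with $\gcd(0,n)=n$), and $\mathcal{M}_n$ is the set of finite values of $\mu_n(\xi,\xi')$ over pairs of reals $\xi\neq\xi'$. The classical Lagrange and Markoff spectra are $\mathcal{L}=\mathcal{L}_1$ and $\mathcal{M}=\mathcal{M}_1$. *)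

theory Defs
  imports "HOL-Analysis.Analysis" "HOL-Library.Liminf_Limsup"
begin

definition lag_quot :: "nat \<Rightarrow> real \<Rightarrow> rat \<Rightarrow> ereal" where
  "lag_quot n xi q = (case quotient_of q of (s, t) \<Rightarrow>
     ereal (real_of_int (gcd t (int n)) / ((real_of_int t)\<^sup>2 * \<bar>real_of_rat q - xi\<bar>)))"

definition lambda_n :: "nat \<Rightarrow> real \<Rightarrow> ereal" where
  "lambda_n n xi = Limsup (filtercomap real_of_rat (at xi)) (lag_quot n xi)"

definition lagrange_spectrum_n :: "nat \<Rightarrow> real set" where
  "lagrange_spectrum_n n =
     {real_of_ereal (lambda_n n xi) | xi. xi \<notin> \<rat> \<and> \<bar>lambda_n n xi\<bar> \<noteq> \<infinity>}"

definition mark_quot :: "nat \<Rightarrow> real \<Rightarrow> real \<Rightarrow> int \<times> int \<Rightarrow> ereal" where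
  "mark_quot n xi xi' p = (case p of (s, t) \<Rightarrow>
     (if (real_of_int s - real_of_int t * xi) * (real_of_int s - real_of_int t * xi') = 0
      then \<infinity>
      else ereal (real_of_int (gcd t (int n)) * \<bar>xi - xi'\<bar> /
                  (\<bar>real_of_int s - real_of_int t * xi\<bar> * \<bar>real_of_int s - real_of_int t * xi'\<bar>))))"

definition mu_n :: "nat \<Rightarrow> real \<Rightarrow> real \<Rightarrow> ereal" where
  "mu_n n xi xi' = (SUP p \<in> UNIV - {(0, 0)}. mark_quot n xi xi' p)"

definition markoff_spectrum_n :: "nat \<Rightarrow> real set" where
  "markoff_spectrum_n n =
     {real_of_ereal (mu_n n xi xi') | xi xi'. xi \<noteq> xi' \<and> \<bar>mu_n n xi xi'\<bar> \<noteq> \<infinity>}"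

end

theory Submission
  imports Defs
begin

text \<open>Let \<open>\<alpha>\<close> be the classical value at \<open>\<xi>\<close> (or at the pair \<open>\<xi>, \<xi>'\<close>). Sorting the
  approximating fractions \<open>a/b\<close> by the residues of \<open>(a, b)\<close> mod \<open>n\<close>, a pigeonhole argument
  gives one residue class \<open>(a\<^sub>0, b\<^sub>0)\<close> which alone realises \<open>\<alpha>\<close>. Take an integer matrix
  \<open>\<gamma> = [[P, Q], [R, U]]\<close> of determinant \<open>n\<close> with \<open>n | R\<close>, \<open>n | U\<close>, \<open>P = b\<^sub>0\<close> and
  \<open>Q = -a\<^sub>0\<close>. Through the adjugate of \<open>\<gamma>\<close>, the weighted quantities of \<open>\<gamma> \<xi>\<close> are at most \<open>n\<close>
  times the classical ones of \<open>\<xi>\<close>, with equality up to the weight \<open>gcd(t, n) \<ge> 1\<close> on the class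
  of \<open>(a\<^sub>0, b\<^sub>0)\<close> (in the Lagrange case up to a factor tending to 1). Hence \<open>\<gamma> \<xi>\<close>
  (resp. \<open>\<gamma> \<xi>, \<gamma> \<xi>'\<close>) has value \<open>n \<alpha>\<close>.\<close>

section \<open>Limits superior\<close>

lemma Limsup_filter_mono: "F \<le> G \<Longrightarrow> Limsup F f \<le> Limsup G f"
  unfolding Limsup_def by (rule INF_superset_mono) (auto dest: filter_leD)

lemma Limsup_principal: "Limsup (principal S) f = (SUP x\<in>S. f x)"
proof (rule antisym)
  show "Limsup (principal S) f \<le> (SUP x\<in>S. f x)"
    unfolding Limsup_def by (rule INF_lower2[of "\<lambda>x. x \<in> S"]) (auto simp: eventually_principal)
  show "(SUP x\<in>S. f x) \<le> Limsup (principal S) f"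
    unfolding Limsup_def eventually_principal by (auto intro!: INF_greatest SUP_subset_mono)
qed

lemma Limsup_finite_partition:
  fixes f :: "'a \<Rightarrow> 'b::complete_linorder" and \<kappa> :: "'a \<Rightarrow> 'c"
  assumes "finite (\<kappa> ` S)" "S \<noteq> {}" "eventually (\<lambda>x. x \<in> S) F"
  obtains r where "r \<in> S" "Limsup (inf F (principal {x. \<kappa> x = \<kappa> r})) f = Limsup F f"
proof -
  define L where "L r = Limsup (inf F (principal {x. \<kappa> x = \<kappa> r})) f" for r
  have "L ` S = (\<lambda>c. Limsup (inf F (principal {x. \<kappa> x = c})) f) ` \<kappa> ` S"
    unfolding L_def by auto
  hence "finite (L ` S)" using assms(1) by simp
  moreover have "L ` S \<noteq> {}" using assms(2) by simp
  ultimately have "Max (L ` S) \<in> L ` S" by (rule Max_in)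
  then obtain r where r: "r \<in> S" "L r = Max (L ` S)" by (metis imageE)
  have "Limsup F f \<le> L r"
    unfolding Limsup_le_iff
  proof (intro allI impI)
    fix y assume "L r < y"
    have "eventually (\<lambda>x. \<kappa> x = \<kappa> s \<longrightarrow> f x < y) F" if "s \<in> S" for s
    proof -
      have "L s < y"
        using Max_ge[OF \<open>finite (L ` S)\<close>, of "L s"] that r \<open>L r < y\<close> by auto
      thus ?thesis unfolding L_def by (auto dest: Limsup_lessD simp: eventually_inf_principal)
    qed
    hence "eventually (\<lambda>x. \<kappa> x = c \<longrightarrow> f x < y) F" if "c \<in> \<kappa> ` S" for c
      using that by blast
    hence "eventually (\<lambda>x. \<forall>c\<in>\<kappa> ` S. \<kappa> x = c \<longrightarrow> f x < y) F"
      using assms(1) by (intro eventually_ball_finite) auto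
    with assms(3) show "eventually (\<lambda>x. f x < y) F"
      by eventually_elim auto
  qed
  moreover have "L r \<le> Limsup F f"
    unfolding L_def by (rule Limsup_filter_mono) simp
  ultimately show ?thesis using that r(1) unfolding L_def by (meson antisym)
qed

lemma Limsup_mult_tendsto_le:
  fixes f g :: "'a \<Rightarrow> real"
  assumes f: "eventually (\<lambda>x. 0 \<le> f x) F" and g: "(g \<longlongrightarrow> c) F" and c: "0 < c"
  shows "Limsup F (\<lambda>x. ereal (f x * g x)) \<le> Limsup F (\<lambda>x. ereal (f x)) * ereal c"
proof (cases "F = bot")
  case False
  have "0 \<le> Limsup F (\<lambda>x. ereal (f x))"
    using False f by (intro le_Limsup) auto
  hence "Limsup F (\<lambda>x. ereal (f x)) * ereal c \<noteq> -\<infinity>"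
    using c by (cases "Limsup F (\<lambda>x. ereal (f x))") auto
  thus ?thesis
  proof (rule ereal_le_mult_one_interval)
    fix z :: ereal assume "0 < z" "z < 1"
    then obtain r where z: "z = ereal r" "0 < r" "r < 1" by (cases z) auto
    have "eventually (\<lambda>x. g x < c / r) F"
      using g z c by (intro order_tendstoD(2)) (auto simp: field_simps)
    with f have "eventually (\<lambda>x. ereal r * ereal (f x * g x) \<le> ereal (f x) * ereal c) F"
    proof eventually_elim
      case (elim x)
      have "r * g x \<le> c" using elim(2) z by (simp add: field_simps)
      hence "f x * (r * g x) \<le> f x * c" using elim(1) by (rule mult_left_mono)
      thus ?case by (simp add: ac_simps)
    qed
    hence "Limsup F (\<lambda>x. ereal r * ereal (f x * g x)) \<le> Limsup F (\<lambda>x. ereal (f x) * ereal c)"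
      by (rule Limsup_mono)
    moreover have "Limsup F (\<lambda>x. ereal r * ereal (f x * g x))
        = ereal r * Limsup F (\<lambda>x. ereal (f x * g x))"
      using False z by (intro Limsup_ereal_mult_left) auto
    moreover have "Limsup F (\<lambda>x. ereal (f x) * ereal c) = Limsup F (\<lambda>x. ereal (f x)) * ereal c"
      using False c by (intro Limsup_ereal_mult_right) auto
    ultimately show "z * Limsup F (\<lambda>x. ereal (f x * g x)) \<le> Limsup F (\<lambda>x. ereal (f x)) * ereal c"
      using z by simp
  qed
qed simp

lemma Limsup_mult_tendsto:
  fixes f g :: "'a \<Rightarrow> real"
  assumes f: "eventually (\<lambda>x. 0 \<le> f x) F" and g: "(g \<longlongrightarrow> c) F" and c: "0 < c"
  shows "Limsup F (\<lambda>x. ereal (f x * g x)) = Limsup F (\<lambda>x. ereal (f x)) * ereal c"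
proof (rule antisym)
  show "Limsup F (\<lambda>x. ereal (f x * g x)) \<le> Limsup F (\<lambda>x. ereal (f x)) * ereal c"
    using assms by (rule Limsup_mult_tendsto_le)
  have g_pos: "eventually (\<lambda>x. 0 < g x) F"
    using g c by (rule order_tendstoD(1))
  have "Limsup F (\<lambda>x. ereal (f x)) = Limsup F (\<lambda>x. ereal (f x * g x * inverse (g x)))"
    using g_pos by (intro Limsup_eq) (auto elim: eventually_mono)
  also have "\<dots> \<le> Limsup F (\<lambda>x. ereal (f x * g x)) * ereal (inverse c)"
    using f g_pos c by (intro Limsup_mult_tendsto_le tendsto_inverse g)
      (auto elim: eventually_elim2 simp: zero_le_mult_iff)
  finally have "Limsup F (\<lambda>x. ereal (f x)) * ereal c
      \<le> Limsup F (\<lambda>x. ereal (f x * g x)) * ereal (inverse c) * ereal c"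
    using c by (intro ereal_mult_right_mono) auto
  also have "\<dots> = Limsup F (\<lambda>x. ereal (f x * g x))"
  proof -
    have "inverse c * c = 1" using c by simp
    thus ?thesis by (simp add: mult.assoc)
  qed
  finally show "Limsup F (\<lambda>x. ereal (f x)) * ereal c \<le> Limsup F (\<lambda>x. ereal (f x * g x))" .
qed

section \<open>Rational approximation and Moebius transformations\<close>

abbreviation rat_at :: "real \<Rightarrow> rat filter" where
  "rat_at x \<equiv> filtercomap real_of_rat (at x)"

lemma tendsto_rat_at: "(f \<longlongrightarrow> l) (at x) \<Longrightarrow> ((\<lambda>q. f (real_of_rat q)) \<longlongrightarrow> l) (rat_at x)"
  by (rule filterlim_compose[OF _ filterlim_filtercomap])

lemma eventually_rat_at: "eventually P (at x) \<Longrightarrow> eventually (\<lambda>q. P (real_of_rat q)) (rat_at x)"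
  by (rule eventually_filtercomapI)

lemma filterlim_rat_at:
  fixes g :: "real \<Rightarrow> real" and h :: "rat \<Rightarrow> rat"
  assumes "\<And>q. real_of_rat (h q) = g (real_of_rat q)" "(g \<longlongrightarrow> x) (at z)" "x \<notin> \<rat>"
  shows "filterlim h (rat_at x) (rat_at z)"
proof -
  have "real_of_rat (h q) \<noteq> x" for q using assms(3) by auto
  hence "filterlim (\<lambda>q. g (real_of_rat q)) (at x) (rat_at z)"
    unfolding filterlim_at using tendsto_rat_at[OF assms(2)] by (simp flip: assms(1))
  thus ?thesis by (simp add: filterlim_filtercomap_iff o_def assms(1))
qed

lemma irrational_linear_form_nonzero:
  fixes x :: real
  assumes "x \<notin> \<rat>" "(a, b) \<noteq> (0, 0)"
  shows "of_int a - of_int b * x \<noteq> 0"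
proof
  assume "of_int a - of_int b * x = 0"
  moreover from this have "b \<noteq> 0" using assms(2) by auto
  ultimately have "x = of_int a / of_int b" by (simp add: field_simps)
  thus False using assms(1) by simp
qed

definition moebius :: "int \<Rightarrow> int \<Rightarrow> int \<Rightarrow> int \<Rightarrow> 'a::field \<Rightarrow> 'a" where
  "moebius P Q R U x = (of_int P * x + of_int Q) / (of_int R * x + of_int U)"

lemma of_rat_moebius: "of_rat (moebius P Q R U q) = moebius P Q R U (of_rat q)"
  by (simp add: moebius_def of_rat_divide of_rat_add of_rat_mult)

lemma moebius_Rats: "x \<in> \<rat> \<Longrightarrow> moebius P Q R U x \<in> \<rat>"
  unfolding moebius_def by (intro Rats_divide Rats_add Rats_mult) auto

lemma moebius_of_int_div:
  assumes "t \<noteq> 0"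
  shows "moebius P Q R U (of_int s / of_int t :: 'a::field_char_0)
    = of_int (P * s + Q * t) / of_int (R * s + U * t)"
proof -
  have "of_int A * (of_int s / of_int t) + of_int B = (of_int (A * s + B * t) / of_int t :: 'a)"
    for A B using assms by (simp add: field_simps)
  thus ?thesis using assms by (simp add: moebius_def)
qed

lemma moebius_denom_nonzero:
  fixes x :: real
  assumes "x \<notin> \<rat>" "P * U - Q * R \<noteq> 0"
  shows "of_int R * x + of_int U \<noteq> 0"
proof -
  have "(U, - R) \<noteq> (0, 0)" using assms(2) by auto
  from irrational_linear_form_nonzero[OF assms(1) this] show ?thesis by (simp add: algebra_simps)
qed

lemma moebius_linear_form:
  fixes x :: real
  assumes "of_int R * x + of_int U \<noteq> 0"
  shows "of_int s - of_int t * moebius P Q R U x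
    = (of_int (U * s - Q * t) - of_int (P * t - R * s) * x) / (of_int R * x + of_int U)"
  using assms by (simp add: moebius_def field_simps)

lemma moebius_diff:
  fixes x y :: real
  assumes "of_int R * x + of_int U \<noteq> 0" "of_int R * y + of_int U \<noteq> 0"
  shows "moebius P Q R U x - moebius P Q R U y
    = of_int (P * U - Q * R) * (x - y) / ((of_int R * x + of_int U) * (of_int R * y + of_int U))"
  using assms by (simp add: moebius_def field_simps)

lemma moebius_adjugate_inverse:
  fixes x :: real
  assumes "of_int R * x + of_int U \<noteq> 0" "P * U - Q * R \<noteq> 0"
  shows "moebius U (- Q) (- R) P (moebius P Q R U x) = x"
proof -
  define \<delta> :: real where "\<delta> = of_int P * of_int U - of_int Q * of_int R"
  have "\<delta> \<noteq> 0"
    using assms(2) unfolding \<delta>_def by (metis of_int_0_eq_iff of_int_diff of_int_mult)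
  have "of_int U * moebius P Q R U x - of_int Q = \<delta> * x / (of_int R * x + of_int U)"
    and "of_int P - of_int R * moebius P Q R U x = \<delta> / (of_int R * x + of_int U)"
    using assms(1) by (simp_all add: moebius_def \<delta>_def field_simps)
  thus ?thesis using assms(1) \<open>\<delta> \<noteq> 0\<close> by (simp add: moebius_def)
qed

lemma moebius_irrational:
  fixes x :: real
  assumes "x \<notin> \<rat>" "P * U - Q * R \<noteq> 0"
  shows "moebius P Q R U x \<notin> \<rat>"
  using moebius_adjugate_inverse[OF moebius_denom_nonzero[OF assms] assms(2)]
    moebius_Rats[of "moebius P Q R U x" U "- Q" "- R" P] assms(1) by auto

lemma tendsto_moebius:
  fixes x :: real
  assumes "of_int R * x + of_int U \<noteq> 0"
  shows "(moebius P Q R U \<longlongrightarrow> moebius P Q R U x) (at x)"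
  unfolding moebius_def using assms by (intro tendsto_intros) auto

lemma eventually_moebius_denom_nonzero:
  fixes x :: real
  assumes "of_int R * x + of_int U \<noteq> 0"
  shows "eventually (\<lambda>v. of_int R * v + of_int U \<noteq> 0) (at x)"
proof -
  have "((\<lambda>v. of_int R * v + of_int U) \<longlongrightarrow> of_int R * x + of_int U) (at x)"
    by (intro tendsto_intros)
  thus ?thesis using assms by (rule tendsto_imp_eventually_ne)
qed

section \<open>Integer matrices of determinant \<open>n\<close>\<close>

text \<open>The witness is \<open>P = b\<^sub>0\<close>, \<open>Q = -a\<^sub>0\<close>, so that \<open>a P + b Q = a b\<^sub>0 - b a\<^sub>0\<close> vanishes mod \<open>n\<close>
  on the class of \<open>(a\<^sub>0, b\<^sub>0)\<close>; the bottom row is \<open>n\<close> times a Bezout pair.\<close>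

lemma level_matrix_exists:
  fixes a0 b0 :: int
  assumes "coprime a0 b0"
  obtains P Q R U :: int where "P * U - Q * R = int n" "int n dvd R" "int n dvd U"
    "\<And>a b. a mod int n = a0 mod int n \<Longrightarrow> b mod int n = b0 mod int n \<Longrightarrow> int n dvd a * P + b * Q"
proof -
  obtain u r where bezout: "u * b0 + r * a0 = 1"
    using bezout_int[of b0 a0] assms by (auto simp: coprime_iff_gcd_eq_1 gcd.commute)
  have "b0 * (int n * u) - (- a0) * (int n * r) = int n * (u * b0 + r * a0)"
    by (simp add: algebra_simps)
  hence det: "b0 * (int n * u) - (- a0) * (int n * r) = int n"
    using bezout by simp
  have "int n dvd a * b0 + b * (- a0)"
    if "a mod int n = a0 mod int n" "b mod int n = b0 mod int n" for a b
  proof -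
    have "int n dvd a - a0" "int n dvd b - b0"
      using that by (simp_all add: mod_eq_dvd_iff)
    hence "int n dvd (a - a0) * b0 - (b - b0) * a0" by simp
    thus ?thesis by (simp add: algebra_simps)
  qed
  with det show ?thesis
    by (intro that[where P = b0 and Q = "- a0" and R = "int n * r" and U = "int n * u"]) simp_all
qed

lemma adjugate_preimage:
  fixes P Q R U a b d :: int
  assumes "P * U - Q * R = d" "d \<noteq> 0" "d dvd P * a + Q * b" "d dvd R * a + U * b"
  obtains s t where "U * s - Q * t = a" "P * t - R * s = b"
    "d * s = P * a + Q * b" "d * t = R * a + U * b"
proof -
  obtain s t where st: "P * a + Q * b = d * s" "R * a + U * b = d * t"
    using assms(3,4) by (auto elim!: dvdE)
  have "d * (U * s - Q * t) = U * (P * a + Q * b) - Q * (R * a + U * b)"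
    "d * (P * t - R * s) = P * (R * a + U * b) - R * (P * a + Q * b)"
    by (simp_all add: st algebra_simps)
  hence "d * (U * s - Q * t) = d * a" "d * (P * t - R * s) = d * b"
    by (simp_all add: algebra_simps flip: assms(1))
  with assms(2) show ?thesis using that st by simp
qed

section \<open>The Markoff and Lagrange forms\<close>

lemma divide_le_self:
  fixes a c :: "'a::linordered_field"
  assumes "0 \<le> a" "1 \<le> c"
  shows "a / c \<le> a"
  using divide_left_mono[OF assms(2,1)] assms(2) by simp

definition markoff_form :: "real \<Rightarrow> real \<Rightarrow> int \<Rightarrow> int \<Rightarrow> real" where
  "markoff_form x x' s t =
     \<bar>x - x'\<bar> / (\<bar>of_int s - of_int t * x\<bar> * \<bar>of_int s - of_int t * x'\<bar>)"

lemma markoff_form_nonneg: "0 \<le> markoff_form x x' s t"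
  by (simp add: markoff_form_def)

lemma markoff_form_mult: "markoff_form x x' (k * s) (k * t) = markoff_form x x' s t / (of_int k)\<^sup>2"
proof -
  have "of_int (k * s) - of_int (k * t) * y = of_int k * (of_int s - of_int t * y)" for y :: real
    by (simp add: algebra_simps)
  thus ?thesis by (simp add: markoff_form_def abs_mult power2_eq_square)
qed

lemma markoff_form_moebius:
  assumes "of_int R * x + of_int U \<noteq> 0" "of_int R * x' + of_int U \<noteq> 0"
  shows "markoff_form (moebius P Q R U x) (moebius P Q R U x') s t
    = \<bar>of_int (P * U - Q * R)\<bar> * markoff_form x x' (U * s - Q * t) (P * t - R * s)"
  unfolding markoff_form_def moebius_diff[OF assms] moebius_linear_form[OF assms(1)]
    moebius_linear_form[OF assms(2)]
  using assms by (simp add: abs_mult abs_divide)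

lemma mark_quot_irrational:
  assumes "x \<notin> \<rat>" "x' \<notin> \<rat>" "(s, t) \<noteq> (0, 0)"
  shows "mark_quot m x x' (s, t) = ereal (of_int (gcd t (int m)) * markoff_form x x' s t)"
  using irrational_linear_form_nonzero[OF assms(1,3)] irrational_linear_form_nonzero[OF assms(2,3)]
  by (simp add: mark_quot_def markoff_form_def)

lemma mark_quot_le_mu_n: "(s, t) \<noteq> (0, 0) \<Longrightarrow> mark_quot m x x' (s, t) \<le> mu_n m x x'"
  unfolding mu_n_def by (rule SUP_upper) simp

lemma mu_n_le_iff: "mu_n m x x' \<le> B \<longleftrightarrow> (\<forall>s t. (s, t) \<noteq> (0, 0) \<longrightarrow> mark_quot m x x' (s, t) \<le> B)"
  unfolding mu_n_def by (auto simp: SUP_le_iff)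

lemma mu_n_rational:
  assumes "x \<in> \<rat> \<or> x' \<in> \<rat>"
  shows "mu_n m x x' = \<infinity>"
proof -
  obtain a b where "b > 0" and "x = of_int a / of_int b \<or> x' = of_int a / of_int b"
    using assms by (metis Rats_cases')
  hence "mark_quot m x x' (a, b) = \<infinity>" by (auto simp: mark_quot_def)
  moreover have "mark_quot m x x' (a, b) \<le> mu_n m x x'"
    using \<open>b > 0\<close> by (intro mark_quot_le_mu_n) auto
  ultimately show ?thesis by (simp add: top_unique[where 'a = ereal, simplified])
qed

lemma mu_n_1_eq_SUP_coprime:
  assumes "x \<notin> \<rat>" "x' \<notin> \<rat>"
  shows "mu_n 1 x x' = (SUP (a, b)\<in>{(a, b). coprime a b}. ereal (markoff_form x x' a b))"
    (is "_ = ?S")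
proof (rule antisym)
  show "mu_n 1 x x' \<le> ?S"
    unfolding mu_n_le_iff
  proof (intro allI impI)
    fix a b :: int assume "(a, b) \<noteq> (0, 0)"
    define g where "g = gcd a b"
    have g: "g \<noteq> 0" using \<open>(a, b) \<noteq> (0, 0)\<close> by (simp add: g_def)
    obtain a' b' where ab: "a = g * a'" "b = g * b'" "coprime a' b'"
      using gcd_coprime_exists[of a b] g unfolding g_def by (auto simp: mult.commute)
    have "1 \<le> (of_int g :: real)\<^sup>2"
      using g by (simp add: one_le_power int_one_le_iff_zero_less order_le_neq_trans g_def)
    hence "ereal (markoff_form x x' a b) \<le> ereal (markoff_form x x' a' b')"
      unfolding ab markoff_form_mult by (simp add: divide_le_self markoff_form_nonneg)
    also have "\<dots> \<le> ?S" using ab(3) by (intro SUP_upper2[of "(a', b')"]) auto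
    finally show "mark_quot 1 x x' (a, b) \<le> ?S"
      using mark_quot_irrational[OF assms \<open>(a, b) \<noteq> (0, 0)\<close>] by simp
  qed
  show "?S \<le> mu_n 1 x x'"
  proof (rule SUP_least, clarify)
    fix a b :: int assume "coprime a b"
    hence "(a, b) \<noteq> (0, 0)" by auto
    thus "ereal (markoff_form x x' a b) \<le> mu_n 1 x x'"
      using mark_quot_le_mu_n[of a b 1 x x'] mark_quot_irrational[OF assms] by simp
  qed
qed

definition lagrange_form :: "real \<Rightarrow> int \<Rightarrow> int \<Rightarrow> real" where
  "lagrange_form x s t = 1 / (\<bar>of_int t\<bar> * \<bar>of_int s - of_int t * x\<bar>)"

lemma lagrange_form_nonneg: "0 \<le> lagrange_form x s t"
  by (simp add: lagrange_form_def)

lemma lagrange_form_mult: "lagrange_form x (k * s) (k * t) = lagrange_form x s t / (of_int k)\<^sup>2"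
proof -
  have "of_int (k * s) - of_int (k * t) * x = of_int k * (of_int s - of_int t * x)"
    by (simp add: algebra_simps)
  thus ?thesis by (simp add: lagrange_form_def abs_mult power2_eq_square)
qed

lemma lagrange_form_moebius:
  assumes denom: "of_int R * x + of_int U \<noteq> 0" and det: "P * U - Q * R \<noteq> 0"
    and ab: "a = U * s - Q * t" "b = P * t - R * s" "b \<noteq> 0"
  shows "lagrange_form (moebius P Q R U x) s t
    = \<bar>of_int (P * U - Q * R)\<bar> * lagrange_form x a b
      * (\<bar>of_int R * x + of_int U\<bar> / \<bar>of_int R * (of_int a / of_int b) + of_int U\<bar>)"
proof -
  define A where "A = of_int a - of_int b * x"
  define D where "D = of_int R * x + of_int U"
  define \<delta> :: real where "\<delta> = of_int (P * U - Q * R)"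
  have "R * a + U * b = (P * U - Q * R) * t" by (simp add: ab algebra_simps)
  hence "of_int R * (of_int a / of_int b) + of_int U = \<delta> * of_int t / (of_int b :: real)"
    using ab(3) unfolding \<delta>_def by (simp add: field_simps flip: of_int_mult of_int_add)
  moreover have "of_int s - of_int t * moebius P Q R U x = A / D"
    using moebius_linear_form[OF denom] by (simp add: A_def D_def ab)
  moreover have "1 / (\<bar>T\<bar> * \<bar>A / D\<bar>) = \<bar>\<delta>\<bar> * (1 / (\<bar>B\<bar> * \<bar>A\<bar>)) * (\<bar>D\<bar> / \<bar>\<delta> * T / B\<bar>)"
    if "\<delta> \<noteq> 0" "B \<noteq> 0" "D \<noteq> 0" for T B :: real
    using that by (cases "A = 0"; cases "T = 0") (simp_all add: abs_mult abs_divide field_simps)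
  moreover have "\<delta> \<noteq> 0" unfolding \<delta>_def of_int_eq_0_iff by (rule det)
  moreover have "D \<noteq> 0" using denom by (simp add: D_def)
  ultimately show ?thesis using ab(3) by (simp add: lagrange_form_def A_def D_def \<delta>_def)
qed

definition lagrange_quot :: "nat \<Rightarrow> real \<Rightarrow> rat \<Rightarrow> real" where
  "lagrange_quot m x q =
     (case quotient_of q of (s, t) \<Rightarrow> of_int (gcd t (int m)) * lagrange_form x s t)"

lemma lag_quot_eq: "lag_quot m x q = ereal (lagrange_quot m x q)"
proof -
  obtain s t where st: "quotient_of q = (s, t)" by fastforce
  have "t > 0" using quotient_of_denom_pos[OF st] .
  moreover have "real_of_rat q = of_int s / of_int t"
    using quotient_of_div[OF st] by (simp add: of_rat_divide)
  ultimately have "(of_int t)\<^sup>2 * \<bar>real_of_rat q - x\<bar> = \<bar>of_int t\<bar> * \<bar>of_int s - of_int t * x\<bar>"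
    by (simp add: power2_eq_square abs_mult flip: abs_divide) (simp add: field_simps)
  thus ?thesis by (simp add: lag_quot_def lagrange_quot_def lagrange_form_def st)
qed

lemma lagrange_quot_nonneg: "0 \<le> lagrange_quot m x q"
  by (simp add: lagrange_quot_def lagrange_form_nonneg split: prod.split)

lemma quotient_of_int_div:
  assumes "t \<noteq> 0" "quotient_of (of_int s / of_int t) = (s', t')"
  obtains k where "\<bar>k\<bar> = gcd s t" "s = k * s'" "t = k * t'"
proof -
  have "t' > 0" "coprime s' t'"
    using quotient_of_denom_pos[OF assms(2)] quotient_of_coprime[OF assms(2)] by auto
  have "(of_int s / of_int t :: rat) = of_int s' / of_int t'" using quotient_of_div[OF assms(2)] .
  hence "s * t' = s' * t"
    using assms(1) \<open>t' > 0\<close> by (simp add: field_simps flip: of_int_mult)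
  hence "t' dvd s' * t" by (metis dvd_triv_right)
  hence "t' dvd t" using \<open>coprime s' t'\<close> by (simp add: coprime_commute coprime_dvd_mult_right_iff)
  then obtain k where t: "t = k * t'" by (metis dvd_def mult.commute)
  have s: "s = k * s'" using \<open>s * t' = s' * t\<close> \<open>t' > 0\<close> unfolding t by simp
  have "gcd s t = \<bar>k\<bar>" using \<open>coprime s' t'\<close> unfolding s t by (simp add: gcd_mult_left abs_mult)
  thus ?thesis using that s t by simp
qed

lemma lagrange_quot_1_int_div:
  assumes "b \<noteq> 0"
  shows "lagrange_quot 1 x (of_int a / of_int b) = (of_int (gcd a b))\<^sup>2 * lagrange_form x a b"
proof -
  obtain a' b' where q: "quotient_of (of_int a / of_int b) = (a', b')" by fastforce
  then obtain k where k: "\<bar>k\<bar> = gcd a b" "a = k * a'" "b = k * b'"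
    using quotient_of_int_div[OF assms] by metis
  have "k \<noteq> 0" using k(3) assms by auto
  have "(of_int k :: real)\<^sup>2 = (of_int (gcd a b))\<^sup>2"
    by (metis k(1) of_int_abs power2_abs)
  moreover have "lagrange_form x a b = lagrange_form x a' b' / (of_int k)\<^sup>2"
    using lagrange_form_mult[of x k a' b'] k(2,3) by simp
  ultimately have "(of_int (gcd a b))\<^sup>2 * lagrange_form x a b = lagrange_form x a' b'"
    using \<open>k \<noteq> 0\<close> assms by simp
  thus ?thesis by (simp add: lagrange_quot_def q)
qed

lemma lagrange_quot_coprime_int_div:
  assumes "coprime s t" "t \<noteq> 0"
  shows "lagrange_quot m x (of_int s / of_int t) = of_int (gcd t (int m)) * lagrange_form x s t"
proof -
  obtain s' t' where q: "quotient_of (of_int s / of_int t) = (s', t')" by fastforce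
  then obtain k where k: "\<bar>k\<bar> = 1" "s = k * s'" "t = k * t'"
    using quotient_of_int_div[OF assms(2)] assms(1) by (metis coprime_iff_gcd_eq_1)
  have "k = 1 \<or> k = - 1" using k(1) by linarith
  hence "gcd t' (int m) = gcd t (int m)" "lagrange_form x s' t' = lagrange_form x s t"
    using k(2,3) by (auto simp: lagrange_form_def abs_minus_commute)
  thus ?thesis by (simp add: lagrange_quot_def q)
qed

lemma lambda_n_eq: "lambda_n m x = Limsup (rat_at x) (\<lambda>q. ereal (lagrange_quot m x q))"
  unfolding lambda_n_def by (simp only: lag_quot_eq[abs_def])

section \<open>Moebius transformations of level \<open>n\<close>\<close>

text \<open>For \<open>(a, b) = (U s - Q t, P t - R s)\<close>, the quantities of \<open>\<gamma> x\<close> at \<open>(s, t)\<close> are \<open>n gcd(t, n)\<close>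
  times those of \<open>x\<close> at \<open>(a, b)\<close>. Since \<open>n\<close> divides \<open>R\<close> and \<open>U\<close>, \<open>gcd(t, n)\<close> divides \<open>a\<close> and \<open>b\<close> and
  is absorbed by reducing \<open>(a, b)\<close> (upper bounds); and \<open>(a, b)\<close> has an integral preimage \<open>(s, t)\<close>
  as soon as \<open>n\<close> divides \<open>a P + b Q\<close> (lower bounds).\<close>

locale level_matrix =
  fixes n :: nat and P Q R U :: int
  assumes n_pos: "n > 0"
    and det: "P * U - Q * R = int n"
    and dvd_R: "int n dvd R" and dvd_U: "int n dvd U"
begin

abbreviation \<gamma> :: "'a::field \<Rightarrow> 'a" where
  "\<gamma> \<equiv> moebius P Q R U"

abbreviation \<gamma>' :: "'a::field \<Rightarrow> 'a" where
  "\<gamma>' \<equiv> moebius U (- Q) (- R) P"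

lemma det_nonzero: "P * U - Q * R \<noteq> 0"
  using det n_pos by simp

lemma denom_nonzero: "x \<notin> \<rat> \<Longrightarrow> of_int R * x + of_int U \<noteq> (0::real)"
  using moebius_denom_nonzero det_nonzero by blast

lemma irrational: "(x::real) \<notin> \<rat> \<Longrightarrow> \<gamma> x \<notin> \<rat>"
  using moebius_irrational det_nonzero by blast

lemma moebius_neq:
  assumes "x \<notin> \<rat>" "x' \<notin> \<rat>" "x \<noteq> (x'::real)"
  shows "\<gamma> x \<noteq> \<gamma> x'"
proof -
  have "(of_int P * of_int U - of_int Q * of_int R :: real) \<noteq> 0"
    using det_nonzero by (metis of_int_eq_0_iff of_int_diff of_int_mult)
  hence "\<gamma> x - \<gamma> x' \<noteq> 0"
    unfolding moebius_diff[OF denom_nonzero[OF assms(1)] denom_nonzero[OF assms(2)]]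
    using denom_nonzero[OF assms(1)] denom_nonzero[OF assms(2)] assms(3) by simp
  thus ?thesis by simp
qed

lemma gcd_dvd_adjugate:
  "gcd t (int n) dvd U * s - Q * t" "gcd t (int n) dvd P * t - R * s"
  using dvd_R dvd_U by (meson dvd_diff dvd_mult dvd_mult2 dvd_trans gcd_dvd1 gcd_dvd2)+

lemma adjugate_nonzero:
  assumes "(s, t) \<noteq> (0, 0)"
  shows "(U * s - Q * t, P * t - R * s) \<noteq> (0, 0)"
proof -
  have "int n * s = P * (U * s - Q * t) + Q * (P * t - R * s)"
    "int n * t = R * (U * s - Q * t) + U * (P * t - R * s)"
    by (simp_all add: algebra_simps flip: det)
  thus ?thesis using assms n_pos by auto
qed

lemma adjugate_preimage_class:
  assumes "int n dvd a * P + b * Q"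
  obtains s t where "U * s - Q * t = a" "P * t - R * s = b"
    "int n * s = P * a + Q * b" "int n * t = R * a + U * b"
proof -
  have "int n dvd P * a + Q * b" using assms by (simp add: mult.commute)
  moreover have "int n dvd R * a + U * b" using dvd_R dvd_U by simp
  moreover have "int n \<noteq> 0" using n_pos by simp
  ultimately show ?thesis using adjugate_preimage[OF det] that by blast
qed

lemma mu_n_moebius_le:
  assumes x: "x \<notin> \<rat>" "x' \<notin> \<rat>"
  shows "mu_n n (\<gamma> x) (\<gamma> x') \<le> ereal (real n) * mu_n 1 x x'"
  unfolding mu_n_le_iff
proof (intro allI impI)
  fix s t :: int assume st: "(s, t) \<noteq> (0, 0)"
  define g where "g = gcd t (int n)"
  obtain a b where ab: "U * s - Q * t = g * a" "P * t - R * s = g * b"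
    using gcd_dvd_adjugate unfolding g_def by (metis dvdE)
  have "(a, b) \<noteq> (0, 0)" using adjugate_nonzero[OF st] ab by auto
  have g: "1 \<le> (of_int g :: real)" using n_pos by (simp add: g_def int_one_le_iff_zero_less)
  have "mark_quot n (\<gamma> x) (\<gamma> x') (s, t) = ereal (real n * (markoff_form x x' a b / of_int g))"
    using mark_quot_irrational[OF irrational irrational st, of x x' n]
      markoff_form_moebius[OF denom_nonzero denom_nonzero, of x x' P Q s t] x det
    by (simp add: ab markoff_form_mult g_def power2_eq_square)
  also have "\<dots> \<le> ereal (real n * markoff_form x x' a b)"
    using g by (simp add: divide_le_self markoff_form_nonneg)
  also have "\<dots> \<le> ereal (real n) * mu_n 1 x x'"
  proof -
    have "ereal (markoff_form x x' a b) \<le> mu_n 1 x x'"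
      using mark_quot_irrational[OF x \<open>(a, b) \<noteq> (0, 0)\<close>, of 1]
        mark_quot_le_mu_n[OF \<open>(a, b) \<noteq> (0, 0)\<close>, of 1 x x'] by simp
    from ereal_mult_left_mono[OF this, of "ereal (real n)"] show ?thesis by simp
  qed
  finally show "mark_quot n (\<gamma> x) (\<gamma> x') (s, t) \<le> ereal (real n) * mu_n 1 x x'" .
qed

lemma mu_n_moebius_ge:
  assumes x: "x \<notin> \<rat>" "x' \<notin> \<rat>"
    and K: "(0, 0) \<notin> K" "\<And>a b. (a, b) \<in> K \<Longrightarrow> int n dvd a * P + b * Q"
  shows "ereal (real n) * (SUP (a, b)\<in>K. ereal (markoff_form x x' a b))
    \<le> mu_n n (\<gamma> x) (\<gamma> x')"
proof (cases "K = {}")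
  case False
  have "ereal (real n * markoff_form x x' a b) \<le> mu_n n (\<gamma> x) (\<gamma> x')"
    if ab: "(a, b) \<in> K" for a b
  proof -
    obtain s t where st: "U * s - Q * t = a" "P * t - R * s = b"
      using adjugate_preimage_class[OF K(2)[OF ab]] by metis
    have "(s, t) \<noteq> (0, 0)" using st K(1) ab by auto
    define c where "c = real n * markoff_form x x' a b"
    have "1 \<le> (of_int (gcd t (int n)) :: real)" using n_pos by (simp add: int_one_le_iff_zero_less)
    hence "c \<le> of_int (gcd t (int n)) * c"
      using mult_right_mono[of 1 "of_int (gcd t (int n))" c]
      by (simp add: c_def markoff_form_nonneg)
    also have "ereal \<dots> = mark_quot n (\<gamma> x) (\<gamma> x') (s, t)"
      using mark_quot_irrational[OF irrational irrational \<open>(s, t) \<noteq> (0, 0)\<close>, of x x' n]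
        markoff_form_moebius[OF denom_nonzero denom_nonzero, of x x' P Q s t] x det st
      by (simp add: c_def)
    also have "\<dots> \<le> mu_n n (\<gamma> x) (\<gamma> x')"
      using \<open>(s, t) \<noteq> (0, 0)\<close> by (rule mark_quot_le_mu_n)
    finally show ?thesis by (simp add: c_def)
  qed
  hence "(SUP (a, b)\<in>K. ereal (real n) * ereal (markoff_form x x' a b)) \<le> mu_n n (\<gamma> x) (\<gamma> x')"
    by (auto intro!: SUP_least)
  thus ?thesis using False by (simp add: Sup_ereal_mult_left' prod.case_distrib)
qed (use n_pos in \<open>simp add: bot_ereal_def\<close>)

definition denom_ratio :: "real \<Rightarrow> real \<Rightarrow> real" where
  "denom_ratio x v = \<bar>of_int R * x + of_int U\<bar> / \<bar>of_int R * v + of_int U\<bar>"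

definition scaled_lagrange_quot :: "real \<Rightarrow> rat \<Rightarrow> real" where
  "scaled_lagrange_quot x r = real n * lagrange_quot 1 x r * denom_ratio x (of_rat r)"

lemma Limsup_scaled_lagrange_quot:
  assumes x: "x \<notin> \<rat>" and F: "F \<le> rat_at x"
  shows "Limsup F (\<lambda>r. ereal (scaled_lagrange_quot x r))
    = ereal (real n) * Limsup F (\<lambda>r. ereal (lagrange_quot 1 x r))"
proof -
  have "(denom_ratio x \<longlongrightarrow> denom_ratio x x) (at x)"
    unfolding denom_ratio_def using denom_nonzero[OF x] by (intro tendsto_intros) auto
  moreover have "denom_ratio x x = 1" using denom_nonzero[OF x] by (simp add: denom_ratio_def)
  ultimately have "((\<lambda>r. real n * denom_ratio x (of_rat r)) \<longlongrightarrow> real n * 1) (rat_at x)"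
    by (intro tendsto_mult_left) (metis tendsto_rat_at)
  hence "Limsup F (\<lambda>r. ereal (lagrange_quot 1 x r * (real n * denom_ratio x (of_rat r))))
      = Limsup F (\<lambda>r. ereal (lagrange_quot 1 x r)) * ereal (real n)"
    using n_pos
    by (intro Limsup_mult_tendsto tendsto_mono[OF F]) (simp_all add: lagrange_quot_nonneg)
  thus ?thesis by (simp add: scaled_lagrange_quot_def ac_simps)
qed

lemma lagrange_quot_moebius_le:
  assumes x: "x \<notin> \<rat>" and q: "of_int (- R) * q + of_int P \<noteq> (0::rat)"
  shows "lagrange_quot n (\<gamma> x) q \<le> scaled_lagrange_quot x (\<gamma>' q)"
proof -
  obtain s t where st: "quotient_of q = (s, t)" by fastforce
  have "t > 0" using quotient_of_denom_pos[OF st] .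
  have q_st: "q = of_int s / of_int t" using quotient_of_div[OF st] .
  define a where "a = U * s - Q * t"
  define b where "b = P * t - R * s"
  define c where "c = real n * lagrange_form x a b * denom_ratio x (of_int a / of_int b)"
  have "(of_int (- R) * q + of_int P :: rat) = of_int b / of_int t"
    using \<open>t > 0\<close> by (simp add: q_st b_def field_simps)
  hence "b \<noteq> 0" using q by auto
  have \<gamma>'_q: "\<gamma>' q = (of_int a / of_int b :: rat)"
    using \<open>t > 0\<close> by (simp add: q_st moebius_of_int_div a_def b_def algebra_simps)
  have "gcd t (int n) dvd gcd a b"
    using gcd_dvd_adjugate unfolding a_def b_def by simp
  hence "(of_int (gcd t (int n)) :: real) \<le> of_int (gcd a b)"
    using \<open>b \<noteq> 0\<close> by (simp add: zdvd_imp_le)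
  also have "\<dots> \<le> (of_int (gcd a b))\<^sup>2"
    using \<open>b \<noteq> 0\<close> by (simp add: power2_eq_square int_one_le_iff_zero_less mult_le_cancel_left1)
  finally have g: "(of_int (gcd t (int n)) :: real) \<le> (of_int (gcd a b))\<^sup>2" .
  have "lagrange_quot n (\<gamma> x) q = of_int (gcd t (int n)) * c"
    using lagrange_form_moebius[OF denom_nonzero[OF x] det_nonzero a_def b_def \<open>b \<noteq> 0\<close>] det
    by (simp add: lagrange_quot_def st denom_ratio_def c_def)
  also have "\<dots> \<le> (of_int (gcd a b))\<^sup>2 * c"
    using g by (intro mult_right_mono) (simp_all add: c_def lagrange_form_nonneg denom_ratio_def)
  also have "\<dots> = scaled_lagrange_quot x (\<gamma>' q)"
    using lagrange_quot_1_int_div[OF \<open>b \<noteq> 0\<close>, of x a]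
    by (simp add: scaled_lagrange_quot_def c_def \<gamma>'_q of_rat_divide)
  finally show ?thesis .
qed

lemma lagrange_quot_moebius_ge:
  assumes x: "x \<notin> \<rat>" and r: "quotient_of r = (a, b)" "int n dvd a * P + b * Q"
    and pole: "of_int R * r + of_int U \<noteq> (0::rat)"
  shows "scaled_lagrange_quot x r \<le> lagrange_quot n (\<gamma> x) (\<gamma> r)"
proof -
  obtain s t where st: "U * s - Q * t = a" "P * t - R * s = b"
    "int n * s = P * a + Q * b" "int n * t = R * a + U * b"
    using adjugate_preimage_class[OF r(2)] by metis
  have "b > 0" "coprime a b"
    using quotient_of_denom_pos[OF r(1)] quotient_of_coprime[OF r(1)] by auto
  have r_ab: "r = of_int a / of_int b" using quotient_of_div[OF r(1)] .
  have "(of_int R * r + of_int U :: rat) = of_int (R * a + U * b) / of_int b"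
    using \<open>b > 0\<close> by (simp add: r_ab field_simps)
  hence "R * a + U * b \<noteq> 0" using pole by (metis div_0 of_int_0)
  hence "t \<noteq> 0" using st(4) by auto
  have "\<gamma> r = (of_int (P * a + Q * b) / of_int (R * a + U * b) :: rat)"
    using \<open>b > 0\<close> by (simp add: r_ab moebius_of_int_div)
  hence \<gamma>_r: "\<gamma> r = (of_int s / of_int t :: rat)" using n_pos by (simp flip: st(3,4))
  have "gcd s t dvd a" "gcd s t dvd b" unfolding st(1,2)[symmetric] by simp_all
  hence "coprime s t"
    using \<open>coprime a b\<close> by (metis coprime_common_divisor gcd_dvd1 gcd_dvd2 is_unit_gcd)
  define c where "c = real n * lagrange_form x a b * denom_ratio x (of_int a / of_int b)"
  have "lagrange_quot 1 x r = lagrange_form x a b" by (simp add: lagrange_quot_def r(1))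
  moreover have "real_of_rat r = of_int a / of_int b" by (simp add: r_ab of_rat_divide)
  ultimately have "scaled_lagrange_quot x r = c" by (simp add: scaled_lagrange_quot_def c_def)
  also have "\<dots> \<le> of_int (gcd t (int n)) * c"
  proof -
    have "1 \<le> (of_int (gcd t (int n)) :: real)" using n_pos by (simp add: int_one_le_iff_zero_less)
    moreover have "0 \<le> c" by (simp add: c_def lagrange_form_nonneg denom_ratio_def)
    ultimately show ?thesis using mult_right_mono[of 1 "of_int (gcd t (int n))" c] by simp
  qed
  also have "\<dots> = lagrange_quot n (\<gamma> x) (\<gamma> r)"
    using lagrange_form_moebius[OF denom_nonzero[OF x] det_nonzero st(1,2)[symmetric]] \<open>b > 0\<close> det
    by (simp add: \<gamma>_r lagrange_quot_coprime_int_div[OF \<open>coprime s t\<close> \<open>t \<noteq> 0\<close>] denom_ratio_def c_def)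
  finally show ?thesis .
qed

lemma lambda_n_moebius_le:
  assumes x: "x \<notin> \<rat>"
  shows "lambda_n n (\<gamma> x) \<le> ereal (real n) * lambda_n 1 x"
proof -
  have pole: "of_int (- R) * \<gamma> x + of_int P \<noteq> (0::real)"
    using moebius_denom_nonzero[OF irrational[OF x], of U P "- Q" "- R"] det_nonzero
    by (simp add: mult.commute)
  have "(\<gamma>' \<longlongrightarrow> x) (at (\<gamma> x))"
    using tendsto_moebius[OF pole, of U "- Q"]
      moebius_adjugate_inverse[OF denom_nonzero[OF x] det_nonzero] by simp
  hence "filterlim \<gamma>' (rat_at x) (rat_at (\<gamma> x))"
    using x by (intro filterlim_rat_at[where g = \<gamma>']) (simp_all add: of_rat_moebius)
  from eventually_moebius_denom_nonzero[OF pole]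
  have "eventually (\<lambda>q. lagrange_quot n (\<gamma> x) q \<le> scaled_lagrange_quot x (\<gamma>' q)) (rat_at (\<gamma> x))"
  proof (rule eventually_rat_at[THEN eventually_mono])
    fix q :: rat assume "of_int (- R) * real_of_rat q + of_int P \<noteq> 0"
    hence "of_int (- R) * q + of_int P \<noteq> 0"
      by (metis of_rat_0 of_rat_add of_rat_mult of_rat_of_int_eq)
    thus "lagrange_quot n (\<gamma> x) q \<le> scaled_lagrange_quot x (\<gamma>' q)"
      using lagrange_quot_moebius_le[OF x] by simp
  qed
  hence "lambda_n n (\<gamma> x) \<le> Limsup (rat_at (\<gamma> x)) (\<lambda>q. ereal (scaled_lagrange_quot x (\<gamma>' q)))"
    unfolding lambda_n_eq by (intro Limsup_mono) (auto elim: eventually_mono)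
  also have "\<dots> \<le> Limsup (filtermap \<gamma>' (rat_at (\<gamma> x))) (\<lambda>r. ereal (scaled_lagrange_quot x r))"
    by (rule Limsup_filtermap_ge)
  also have "\<dots> \<le> Limsup (rat_at x) (\<lambda>r. ereal (scaled_lagrange_quot x r))"
    using \<open>filterlim \<gamma>' (rat_at x) (rat_at (\<gamma> x))\<close> unfolding filterlim_def
    by (rule Limsup_filter_mono)
  also have "\<dots> = ereal (real n) * lambda_n 1 x"
    unfolding lambda_n_eq using x by (rule Limsup_scaled_lagrange_quot) simp
  finally show ?thesis .
qed

lemma lambda_n_moebius_ge:
  assumes x: "x \<notin> \<rat>"
    and K: "\<And>r. r \<in> K \<Longrightarrow> int n dvd fst (quotient_of r) * P + snd (quotient_of r) * Q"
  shows "ereal (real n) * Limsup (inf (rat_at x) (principal K)) (\<lambda>r. ereal (lagrange_quot 1 x r))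
    \<le> lambda_n n (\<gamma> x)"
proof -
  define F where "F = inf (rat_at x) (principal K)"
  have "filterlim \<gamma> (rat_at (\<gamma> x)) (rat_at x)"
    using tendsto_moebius[OF denom_nonzero[OF x]] irrational[OF x]
    by (intro filterlim_rat_at[where g = \<gamma>]) (simp_all add: of_rat_moebius)
  hence "filterlim \<gamma> (rat_at (\<gamma> x)) F"
    unfolding F_def by (rule filterlim_mono) simp_all
  from eventually_moebius_denom_nonzero[OF denom_nonzero[OF x]]
  have "eventually (\<lambda>r. of_int R * real_of_rat r + of_int U \<noteq> 0 \<and> r \<in> K) F"
    unfolding F_def eventually_inf_principal by (auto dest: eventually_rat_at elim: eventually_mono)
  hence "eventually (\<lambda>r. scaled_lagrange_quot x r \<le> lagrange_quot n (\<gamma> x) (\<gamma> r)) F"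
  proof (rule eventually_mono, clarify)
    fix r :: rat assume "of_int R * real_of_rat r + of_int U \<noteq> 0" "r \<in> K"
    hence "of_int R * r + of_int U \<noteq> 0"
      by (metis of_rat_0 of_rat_add of_rat_mult of_rat_of_int_eq)
    thus "scaled_lagrange_quot x r \<le> lagrange_quot n (\<gamma> x) (\<gamma> r)"
      by (rule lagrange_quot_moebius_ge[OF x prod.collapse[symmetric] K[OF \<open>r \<in> K\<close>]])
  qed
  have "ereal (real n) * Limsup F (\<lambda>r. ereal (lagrange_quot 1 x r))
      = Limsup F (\<lambda>r. ereal (scaled_lagrange_quot x r))"
    unfolding F_def using x inf_le1 by (rule Limsup_scaled_lagrange_quot[symmetric])
  also have "\<dots> \<le> Limsup F (\<lambda>r. ereal (lagrange_quot n (\<gamma> x) (\<gamma> r)))"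
    using \<open>eventually (\<lambda>r. scaled_lagrange_quot x r \<le> lagrange_quot n (\<gamma> x) (\<gamma> r)) F\<close>
    by (intro Limsup_mono) (auto elim: eventually_mono)
  also have "\<dots> \<le> Limsup (filtermap \<gamma> F) (\<lambda>q. ereal (lagrange_quot n (\<gamma> x) q))"
    by (rule Limsup_filtermap_ge)
  also have "\<dots> \<le> lambda_n n (\<gamma> x)"
    using \<open>filterlim \<gamma> (rat_at (\<gamma> x)) F\<close> unfolding filterlim_def lambda_n_eq
    by (rule Limsup_filter_mono)
  finally show ?thesis unfolding F_def .
qed

end

lemma markoff_spectrum_scale:
  assumes n: "n > 0" and "\<alpha> \<in> markoff_spectrum_n 1"
  shows "real n * \<alpha> \<in> markoff_spectrum_n n"
proof -
  obtain x x' where "x \<noteq> x'" "\<bar>mu_n 1 x x'\<bar> \<noteq> \<infinity>" "\<alpha> = real_of_ereal (mu_n 1 x x')"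
    using assms(2) unfolding markoff_spectrum_n_def by auto
  hence mu: "mu_n 1 x x' = ereal \<alpha>" by (cases "mu_n 1 x x'") auto
  have x: "x \<notin> \<rat>" "x' \<notin> \<rat>" using mu_n_rational[of x x' 1] mu by auto
  define S where "S = {(a, b). coprime a (b::int)}"
  define \<kappa> where "\<kappa> p = (fst p mod int n, snd p mod int n)" for p :: "int \<times> int"
  define f where "f p = ereal (markoff_form x x' (fst p) (snd p))" for p
  have "\<kappa> ` S \<subseteq> {0..<int n} \<times> {0..<int n}" using n by (auto simp: \<kappa>_def)
  hence "finite (\<kappa> ` S)" by (rule finite_subset) simp
  moreover have "S \<noteq> {}" by (auto simp: S_def intro!: exI[of _ 1])
  ultimately obtain p0 where "p0 \<in> S"
    and "Limsup (inf (principal S) (principal {p. \<kappa> p = \<kappa> p0})) f = Limsup (principal S) f"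
    using Limsup_finite_partition[of \<kappa> S "principal S" f] by (auto simp: eventually_principal)
  hence class_sup: "(SUP p\<in>S \<inter> {p. \<kappa> p = \<kappa> p0}. f p) = ereal \<alpha>"
    using mu mu_n_1_eq_SUP_coprime[OF x] by (simp add: Limsup_principal S_def f_def case_prod_beta')
  obtain a0 b0 where p0: "p0 = (a0, b0)" "coprime a0 b0" using \<open>p0 \<in> S\<close> by (auto simp: S_def)
  obtain P Q R U where "P * U - Q * R = int n" "int n dvd R" "int n dvd U"
    and class_dvd: "\<And>a b. a mod int n = a0 mod int n \<Longrightarrow> b mod int n = b0 mod int n
      \<Longrightarrow> int n dvd a * P + b * Q"
    using level_matrix_exists[OF p0(2)] by metis
  then interpret level_matrix n P Q R U using n by unfold_locales
  have "ereal (real n) * ereal \<alpha> \<le> mu_n n (\<gamma> x) (\<gamma> x')"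
    using mu_n_moebius_ge[OF x, of "S \<inter> {p. \<kappa> p = \<kappa> p0}"] class_sup class_dvd
    by (auto simp: S_def \<kappa>_def p0 f_def case_prod_beta')
  moreover have "mu_n n (\<gamma> x) (\<gamma> x') \<le> ereal (real n) * ereal \<alpha>"
    using mu_n_moebius_le[OF x] mu by simp
  ultimately have "mu_n n (\<gamma> x) (\<gamma> x') = ereal (real n * \<alpha>)" by simp
  thus ?thesis
    using moebius_neq[OF x \<open>x \<noteq> x'\<close>] unfolding markoff_spectrum_n_def by force
qed

lemma lagrange_spectrum_scale:
  assumes n: "n > 0" and "\<alpha> \<in> lagrange_spectrum_n 1"
  shows "real n * \<alpha> \<in> lagrange_spectrum_n n"
proof -
  obtain x where x: "x \<notin> \<rat>" "\<bar>lambda_n 1 x\<bar> \<noteq> \<infinity>" "\<alpha> = real_of_ereal (lambda_n 1 x)"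
    using assms(2) unfolding lagrange_spectrum_n_def by auto
  hence lam: "lambda_n 1 x = ereal \<alpha>" by (cases "lambda_n 1 x") auto
  define \<kappa> where "\<kappa> r = (fst (quotient_of r) mod int n, snd (quotient_of r) mod int n)" for r
  have "\<kappa> ` UNIV \<subseteq> {0..<int n} \<times> {0..<int n}" using n by (auto simp: \<kappa>_def)
  hence "finite (\<kappa> ` UNIV)" by (rule finite_subset) simp
  then obtain r0 where class_limsup:
    "Limsup (inf (rat_at x) (principal {r. \<kappa> r = \<kappa> r0})) (\<lambda>r. ereal (lagrange_quot 1 x r))
      = lambda_n 1 x"
    unfolding lambda_n_eq using Limsup_finite_partition[of \<kappa> UNIV "rat_at x"] by auto
  obtain a0 b0 where r0: "quotient_of r0 = (a0, b0)" by fastforce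
  obtain P Q R U where "P * U - Q * R = int n" "int n dvd R" "int n dvd U"
    and class_dvd: "\<And>a b. a mod int n = a0 mod int n \<Longrightarrow> b mod int n = b0 mod int n
      \<Longrightarrow> int n dvd a * P + b * Q"
    using level_matrix_exists[OF quotient_of_coprime[OF r0]] by metis
  then interpret level_matrix n P Q R U using n by unfold_locales
  have "ereal (real n) * ereal \<alpha> \<le> lambda_n n (\<gamma> x)"
    using lambda_n_moebius_ge[OF x(1), of "{r. \<kappa> r = \<kappa> r0}"] class_limsup class_dvd lam
    by (auto simp: \<kappa>_def r0)
  moreover have "lambda_n n (\<gamma> x) \<le> ereal (real n) * ereal \<alpha>"
    using lambda_n_moebius_le[OF x(1)] lam by simp
  ultimately have "lambda_n n (\<gamma> x) = ereal (real n * \<alpha>)" by simp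
  thus ?thesis using irrational[OF x(1)] unfolding lagrange_spectrum_n_def by force
qed

theorem proposition3p8:
  fixes n :: nat
  assumes "n > 0"
  shows "(\<lambda>a. real n * a) ` lagrange_spectrum_n 1 \<subseteq> lagrange_spectrum_n n
       \<and> (\<lambda>a. real n * a) ` markoff_spectrum_n 1 \<subseteq> markoff_spectrum_n n"
  using lagrange_spectrum_scale[OF assms] markoff_spectrum_scale[OF assms] by blast

end
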